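(* Let $\alpha>0$, $\lambda\in\mathbb C$, and $\gamma=1/\sqrt{1+\alpha}$. The equation $$(\lambda^2+\lambda)\varphi+\Big((2\lambda+2)y+\frac{2\alpha}{\sqrt{1+\alpha}+y}\Big)\varphi'+(y^2-1)\varphi''=0 \tag{E1}$$ has a nontrivial solution $\varphi\in C^\infty[-1,1]$ if and only if the equation $$(\lambda^2-\lambda)\psi+\big(2\lambda y'+2\sqrt{1+\alpha}\big)\psi'+(y'^2-1)\psi''=0 \tag{E2}$$ has a nontrivial solution $\psi\in C^\infty[-1,1]$. Moreover, solutions correspond via $$\psi(y')=\Big(\frac{1-\gamma y'}{\sqrt{1-\gamma^2}}\Big)^{-\lambda}\varphi\Big(\frac{y'-\gamma}{1-\gamma y'}\Big).$$
   Context: (E1) is the eigenvalue equation of the linearization at the blow-up profile $U_{\alpha,\infty,\kappa}(s,y)=\alpha s-\alpha\log(\sqrt{1+\alpha}+y)+\kappa$ of the self-similar form of $u_{tt}-u_{xx}=(u_x)^2$; (E2) is the eigenvalue equation of the linearization at its Lorentz transform, which is independent of $y'$. *)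

theory Defs
  imports "HOL-Analysis.Analysis"
begin

abbreviation I11 :: "real set" where "I11 \<equiv> {-1..1}"

definition deriv_chain :: "(real \<Rightarrow> complex) \<Rightarrow> (nat \<Rightarrow> real \<Rightarrow> complex) \<Rightarrow> bool" where
  "deriv_chain f D \<longleftrightarrow> (\<forall>x\<in>I11. D 0 x = f x) \<and>
     (\<forall>k. \<forall>x\<in>I11. (D k has_vector_derivative D (Suc k) x) (at x within I11))"

definition smooth_I11 :: "(real \<Rightarrow> complex) \<Rightarrow> bool" where
  "smooth_I11 f \<longleftrightarrow> (\<exists>D. deriv_chain f D)"

definition solves_E1 :: "real \<Rightarrow> complex \<Rightarrow> (real \<Rightarrow> complex) \<Rightarrow> bool" where
  "solves_E1 \<alpha> lam \<phi> \<longleftrightarrow> (\<exists>D. deriv_chain \<phi> D \<and>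
     (\<forall>y\<in>I11. (lam^2 + lam) * \<phi> y
        + ((2*lam + 2) * of_real y + of_real (2*\<alpha> / (sqrt (1+\<alpha>) + y))) * D 1 y
        + of_real (y^2 - 1) * D 2 y = 0))"

definition solves_E2 :: "real \<Rightarrow> complex \<Rightarrow> (real \<Rightarrow> complex) \<Rightarrow> bool" where
  "solves_E2 \<alpha> lam \<psi> \<longleftrightarrow> (\<exists>D. deriv_chain \<psi> D \<and>
     (\<forall>y\<in>I11. (lam^2 - lam) * \<psi> y
        + (2*lam * of_real y + of_real (2 * sqrt (1+\<alpha>))) * D 1 y
        + of_real (y^2 - 1) * D 2 y = 0))"

definition nontrivial_I11 :: "(real \<Rightarrow> complex) \<Rightarrow> bool" where
  "nontrivial_I11 f \<longleftrightarrow> (\<exists>x\<in>I11. f x \<noteq> 0)"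

text \<open>The Lorentz-type transform from solutions of (E1) to solutions of (E2),
  with \<gamma> = 1/sqrt(1+\<alpha>). The base is a positive real on [-1,1].\<close>
definition lorentz :: "real \<Rightarrow> complex \<Rightarrow> (real \<Rightarrow> complex) \<Rightarrow> real \<Rightarrow> complex" where
  "lorentz \<alpha> lam \<phi> y' =
     (let \<gamma> = 1 / sqrt (1+\<alpha>) in
       (complex_of_real ((1 - \<gamma>*y') / sqrt (1 - \<gamma>^2))) powr (-lam)
       * \<phi> ((y' - \<gamma>) / (1 - \<gamma>*y')))"

end

theory Submission
  imports Defs
begin

text \<open>The substitution \<open>y = boost \<gamma> y' = (y' - \<gamma>)/(1 - \<gamma> y')\<close> (a Lorentz boost) maps \<open>[-1,1]\<close>
  onto itself, and the weight \<open>((1 - \<gamma> y')/\<surd>(1 - \<gamma>\<^sup>2))\<^sup>-\<^sup>\<lambda>\<close> is smooth and nowhere zero there.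
  For \<open>\<psi> = weight \<cdot> (\<phi> \<circ> boost \<gamma>)\<close> the chain rule gives the identity
  \<open>E2[\<psi>](y') = weight(y') \<cdot> boost'(y') \<cdot> E1[\<phi>](boost \<gamma> y')\<close>, so \<open>\<phi>\<close> solves (E1) iff \<open>\<psi>\<close> solves (E2).
  Since \<open>boost (-\<gamma>)\<close> inverts \<open>boost \<gamma>\<close>, every smooth \<open>\<psi>\<close> is of this form.\<close>

definition Ck_I11 :: "nat \<Rightarrow> (real \<Rightarrow> 'a::real_normed_vector) \<Rightarrow> bool" where
  "Ck_I11 n f \<longleftrightarrow> (\<exists>D. D 0 = f \<and>
     (\<forall>k<n. \<forall>x\<in>I11. (D k has_vector_derivative D (Suc k) x) (at x within I11)))"

definition Cinf_I11 :: "(real \<Rightarrow> 'a::real_normed_vector) \<Rightarrow> bool" where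
  "Cinf_I11 f \<longleftrightarrow> (\<exists>D. D 0 = f \<and>
     (\<forall>k. \<forall>x\<in>I11. (D k has_vector_derivative D (Suc k) x) (at x within I11)))"

lemma Ck_I11_0 [simp]: "Ck_I11 0 f"
  unfolding Ck_I11_def by auto

lemma Ck_I11_Suc:
  "Ck_I11 (Suc n) f \<longleftrightarrow>
     (\<exists>f'. (\<forall>x\<in>I11. (f has_vector_derivative f' x) (at x within I11)) \<and> Ck_I11 n f')"
proof
  assume "Ck_I11 (Suc n) f"
  then obtain D where "D 0 = f"
    and D: "\<forall>k<Suc n. \<forall>x\<in>I11. (D k has_vector_derivative D (Suc k) x) (at x within I11)"
    unfolding Ck_I11_def by blast
  then have "\<forall>x\<in>I11. (f has_vector_derivative D 1 x) (at x within I11)"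
    by force
  moreover have "Ck_I11 n (D 1)"
    unfolding Ck_I11_def using D by (intro exI[of _ "\<lambda>k. D (Suc k)"]) auto
  ultimately show "\<exists>f'. (\<forall>x\<in>I11. (f has_vector_derivative f' x) (at x within I11)) \<and> Ck_I11 n f'"
    by blast
next
  assume "\<exists>f'. (\<forall>x\<in>I11. (f has_vector_derivative f' x) (at x within I11)) \<and> Ck_I11 n f'"
  then obtain f' D where f': "\<forall>x\<in>I11. (f has_vector_derivative f' x) (at x within I11)"
    and D: "D 0 = f'" "\<forall>k<n. \<forall>x\<in>I11. (D k has_vector_derivative D (Suc k) x) (at x within I11)"
    unfolding Ck_I11_def by blast
  show "Ck_I11 (Suc n) f"
    unfolding Ck_I11_def
    using f' D by (intro exI[of _ "case_nat f D"]) (auto simp: less_Suc_eq_0_disj)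
qed

lemma Ck_I11_SucD: "Ck_I11 (Suc n) f \<Longrightarrow> Ck_I11 n f"
  unfolding Ck_I11_def by force

lemma Cinf_I11_imp_Ck_I11: "Cinf_I11 f \<Longrightarrow> Ck_I11 n f"
  unfolding Cinf_I11_def Ck_I11_def by blast

lemma Cinf_I11_derivative:
  assumes "Cinf_I11 f"
  obtains f' where "\<forall>x\<in>I11. (f has_vector_derivative f' x) (at x within I11)" "Cinf_I11 f'"
proof -
  obtain D where "D 0 = f"
    and D: "\<forall>k. \<forall>x\<in>I11. (D k has_vector_derivative D (Suc k) x) (at x within I11)"
    using assms unfolding Cinf_I11_def by blast
  then have "\<forall>x\<in>I11. (f has_vector_derivative D 1 x) (at x within I11)"
    by force
  moreover have "Cinf_I11 (D 1)"
    unfolding Cinf_I11_def using D by (intro exI[of _ "\<lambda>k. D (Suc k)"]) auto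
  ultimately show thesis by (rule that)
qed

lemma Ck_I11_add: "Ck_I11 n f \<Longrightarrow> Ck_I11 n g \<Longrightarrow> Ck_I11 n (\<lambda>x. f x + g x)"
  unfolding Ck_I11_def
  by (elim exE conjE, rename_tac D E, rule_tac x = "\<lambda>k x. D k x + E k x" in exI)
     (auto intro: has_vector_derivative_add)

lemma Ck_I11_mult:
  fixes f g :: "real \<Rightarrow> 'a::real_normed_algebra"
  shows "Ck_I11 n f \<Longrightarrow> Ck_I11 n g \<Longrightarrow> Ck_I11 n (\<lambda>x. f x * g x)"
proof (induction n arbitrary: f g)
  case 0
  then show ?case by simp
next
  case (Suc n)
  obtain f' where f': "\<forall>x\<in>I11. (f has_vector_derivative f' x) (at x within I11)" "Ck_I11 n f'"
    using Suc.prems(1) Ck_I11_Suc by blast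
  obtain g' where g': "\<forall>x\<in>I11. (g has_vector_derivative g' x) (at x within I11)" "Ck_I11 n g'"
    using Suc.prems(2) Ck_I11_Suc by blast
  have "Ck_I11 n (\<lambda>x. f x * g' x + f' x * g x)"
    using Ck_I11_SucD[OF Suc.prems(1)] Ck_I11_SucD[OF Suc.prems(2)] f'(2) g'(2)
    by (intro Ck_I11_add Suc.IH)
  moreover have "\<forall>x\<in>I11. ((\<lambda>x. f x * g x) has_vector_derivative f x * g' x + f' x * g x) (at x within I11)"
    using f' g' by (auto intro: has_vector_derivative_mult)
  ultimately show ?case
    unfolding Ck_I11_Suc by (intro exI[of _ "\<lambda>x. f x * g' x + f' x * g x"] conjI) auto
qed

lemma Ck_I11_of_real:
  fixes g :: "real \<Rightarrow> real"
  shows "Ck_I11 n g \<Longrightarrow> Ck_I11 n (\<lambda>x. complex_of_real (g x))"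
  unfolding Ck_I11_def
  by (elim exE conjE, rename_tac D, rule_tac x = "\<lambda>k x. complex_of_real (D k x)" in exI)
     (auto intro!: has_vector_derivative_of_real simp: has_real_derivative_iff_has_vector_derivative)

lemma Ck_I11_compose:
  fixes \<phi> :: "real \<Rightarrow> complex" and g :: "real \<Rightarrow> real"
  assumes "Cinf_I11 g" "g ` I11 \<subseteq> I11"
  shows "Cinf_I11 \<phi> \<Longrightarrow> Ck_I11 n (\<lambda>x. \<phi> (g x))"
proof (induction n arbitrary: \<phi>)
  case 0
  then show ?case by simp
next
  case (Suc n)
  obtain \<phi>' where \<phi>': "\<forall>x\<in>I11. (\<phi> has_vector_derivative \<phi>' x) (at x within I11)" "Cinf_I11 \<phi>'"
    using Suc.prems Cinf_I11_derivative by blast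
  obtain g' where g': "\<forall>x\<in>I11. (g has_vector_derivative g' x) (at x within I11)" "Cinf_I11 g'"
    using assms(1) Cinf_I11_derivative by blast
  have "Ck_I11 n (\<lambda>x. complex_of_real (g' x) * \<phi>' (g x))"
    by (intro Ck_I11_mult Suc.IH Ck_I11_of_real Cinf_I11_imp_Ck_I11 \<phi>' g')
  moreover have "((\<lambda>x. \<phi> (g x)) has_vector_derivative complex_of_real (g' x) * \<phi>' (g x)) (at x within I11)"
    if x: "x \<in> I11" for x
  proof -
    have "(\<phi> has_vector_derivative \<phi>' (g x)) (at (g x) within g ` I11)"
      using \<phi>'(1) assms(2) x by (blast intro: has_vector_derivative_within_subset)
    from vector_diff_chain_within[OF g'(1)[rule_format, OF x] this]
    show ?thesis by (simp add: o_def scaleR_conv_of_real)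
  qed
  ultimately show ?case
    unfolding Ck_I11_Suc by (intro exI[of _ "\<lambda>x. complex_of_real (g' x) * \<phi>' (g x)"] conjI) auto
qed

lemma has_vector_derivative_unique_I11:
  assumes "x \<in> I11" "\<And>y. y \<in> I11 \<Longrightarrow> f y = g y"
    "(f has_vector_derivative a) (at x within I11)" "(g has_vector_derivative b) (at x within I11)"
  shows "a = b"
proof -
  have "(g has_vector_derivative a) (at x within I11)"
    using has_vector_derivative_transform[OF assms(1), of g f] assms by auto
  moreover have "at x within I11 \<noteq> bot"
    using assms(1) by (simp add: trivial_limit_within)
  ultimately show ?thesis
    using vector_derivative_unique_within assms(4) by blast
qed

text \<open>A chain of derivatives of every finite length glues to one infinite chain because derivatives
  within \<open>[-1,1]\<close> are unique.\<close>

lemma Cinf_I11_iff_Ck_I11: "Cinf_I11 h \<longleftrightarrow> (\<forall>n. Ck_I11 n h)"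
proof
  assume "\<forall>n. Ck_I11 n h"
  then obtain E where E0: "\<And>n. E n 0 = h"
    and E: "\<And>n k x. k < n \<Longrightarrow> x \<in> I11 \<Longrightarrow> (E n k has_vector_derivative E n (Suc k) x) (at x within I11)"
    unfolding Ck_I11_def by metis
  have agree: "\<forall>n m. k \<le> n \<longrightarrow> k \<le> m \<longrightarrow> (\<forall>x\<in>I11. E n k x = E m k x)" for k
  proof (induction k)
    case 0
    then show ?case using E0 by simp
  next
    case (Suc k)
    show ?case
    proof (intro allI impI ballI)
      fix n m x assume nm: "Suc k \<le> n" "Suc k \<le> m" and x: "x \<in> I11"
      show "E n (Suc k) x = E m (Suc k) x"
        by (rule has_vector_derivative_unique_I11[OF x _ E E]) (use Suc.IH nm x in auto)
    qed
  qed
  show "Cinf_I11 h"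
    unfolding Cinf_I11_def
  proof (intro exI[of _ "\<lambda>k. E k k"] conjI allI ballI)
    fix k x assume x: "x \<in> I11"
    have "(E (Suc k) k has_vector_derivative E (Suc k) (Suc k) x) (at x within I11)"
      using E x by auto
    then show "(E k k has_vector_derivative E (Suc k) (Suc k) x) (at x within I11)"
      by (rule has_vector_derivative_transform[OF x, rotated]) (use agree in auto)
  qed (rule E0)
qed (blast intro: Cinf_I11_imp_Ck_I11)

lemma Cinf_I11_mult:
  fixes f g :: "real \<Rightarrow> 'a::real_normed_algebra"
  shows "Cinf_I11 f \<Longrightarrow> Cinf_I11 g \<Longrightarrow> Cinf_I11 (\<lambda>x. f x * g x)"
  by (simp add: Cinf_I11_iff_Ck_I11 Ck_I11_mult)

lemma Cinf_I11_compose: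
  fixes \<phi> :: "real \<Rightarrow> complex" and g :: "real \<Rightarrow> real"
  shows "Cinf_I11 g \<Longrightarrow> g ` I11 \<subseteq> I11 \<Longrightarrow> Cinf_I11 \<phi> \<Longrightarrow> Cinf_I11 (\<lambda>x. \<phi> (g x))"
  by (simp add: Cinf_I11_iff_Ck_I11 Ck_I11_compose)

lemma Cinf_I11_cong:
  assumes "Cinf_I11 f" "\<And>x. x \<in> I11 \<Longrightarrow> f x = g x"
  shows "Cinf_I11 g"
proof -
  obtain D where D: "D 0 = f" "\<forall>k. \<forall>x\<in>I11. (D k has_vector_derivative D (Suc k) x) (at x within I11)"
    using assms(1) unfolding Cinf_I11_def by blast
  show ?thesis
    unfolding Cinf_I11_def
  proof (intro exI[of _ "D(0 := g)"] conjI allI ballI)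
    fix k x assume x: "x \<in> I11"
    show "((D(0 := g)) k has_vector_derivative (D(0 := g)) (Suc k) x) (at x within I11)"
      using D x assms(2) by (cases k) (auto intro: has_vector_derivative_transform[OF x, of _ f])
  qed simp
qed

lemma smooth_I11_iff_Cinf_I11: "smooth_I11 f \<longleftrightarrow> Cinf_I11 f"
proof
  assume "smooth_I11 f"
  then obtain D where D: "deriv_chain f D"
    unfolding smooth_I11_def by blast
  then have "Cinf_I11 (D 0)"
    unfolding Cinf_I11_def deriv_chain_def by blast
  then show "Cinf_I11 f"
    by (rule Cinf_I11_cong) (use D in \<open>simp add: deriv_chain_def\<close>)
qed (auto simp: smooth_I11_def Cinf_I11_def deriv_chain_def)

lemma deriv_chain_derivatives:
  assumes "deriv_chain f D"
  shows "\<forall>x\<in>I11. (f has_vector_derivative D 1 x) (at x within I11)"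
    and "\<forall>x\<in>I11. (D 1 has_vector_derivative D 2 x) (at x within I11)"
proof -
  from assms have D0: "\<forall>x\<in>I11. D 0 x = f x"
    and D: "\<forall>k. \<forall>x\<in>I11. (D k has_vector_derivative D (Suc k) x) (at x within I11)"
    unfolding deriv_chain_def by auto
  show "\<forall>x\<in>I11. (f has_vector_derivative D 1 x) (at x within I11)"
  proof
    fix x :: real assume x: "x \<in> I11"
    have "(D 0 has_vector_derivative D 1 x) (at x within I11)"
      using D x by simp
    then show "(f has_vector_derivative D 1 x) (at x within I11)"
      by (rule has_vector_derivative_transform[OF x, rotated]) (use D0 in auto)
  qed
  show "\<forall>x\<in>I11. (D 1 has_vector_derivative D 2 x) (at x within I11)"
    using D by (simp add: numeral_2_eq_2)
qed

lemma Cinf_I11_powr_affine_real: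
  fixes a b e :: real
  assumes pos: "\<And>y. y \<in> I11 \<Longrightarrow> a + b*y > 0"
  shows "Cinf_I11 (\<lambda>y. (a + b*y) powr e)"
  unfolding Cinf_I11_def
proof (intro exI[of _ "\<lambda>k y. (\<Prod>j<k. (e - real j)) * b^k * (a + b*y) powr (e - real k)"] conjI allI ballI)
  fix k y assume y: "y \<in> I11"
  have "((\<lambda>y. a + b*y) has_real_derivative b) (at y)"
    by (rule derivative_eq_intros refl | simp)+
  from DERIV_fun_powr[OF this pos[OF y]]
  have "((\<lambda>y. (a + b*y) powr (e - real k)) has_real_derivative
      (e - real k) * (a + b*y) powr (e - real k - of_nat 1) * b) (at y)" .
  then have "((\<lambda>y. (\<Prod>j<k. (e - real j)) * b^k * (a + b*y) powr (e - real k)) has_real_derivative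
      (\<Prod>j<k. (e - real j)) * b^k * ((e - real k) * (a + b*y) powr (e - real k - of_nat 1) * b)) (at y within I11)"
    by (rule DERIV_cmult[OF has_field_derivative_at_within])
  then show "((\<lambda>y. (\<Prod>j<k. (e - real j)) * b^k * (a + b*y) powr (e - real k)) has_vector_derivative
      (\<Prod>j<Suc k. (e - real j)) * b^(Suc k) * (a + b*y) powr (e - real (Suc k))) (at y within I11)"
    unfolding has_real_derivative_iff_has_vector_derivative[symmetric]
    by (rule DERIV_cong) (simp add: algebra_simps diff_diff_eq)
qed simp

lemma has_vector_derivative_powr_affine:
  fixes a b :: real and e :: complex
  assumes "a + b*y > 0"
  shows "((\<lambda>y. complex_of_real (a + b*y) powr e) has_vector_derivative
       e * complex_of_real (a + b*y) powr (e - 1) * of_real b) (at y within S)"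
proof -
  have "(of_real a + of_real b * of_real y :: complex) \<notin> \<real>\<^sub>\<le>\<^sub>0"
    using assms by (metis nonpos_Reals_of_real_iff not_less of_real_add of_real_mult)
  moreover have "((\<lambda>z. of_real a + of_real b * z) has_field_derivative of_real b) (at (of_real y))"
    by (rule derivative_eq_intros refl | simp)+
  ultimately have "((\<lambda>z. (of_real a + of_real b * z) powr e) has_field_derivative
      e * (of_real a + of_real b * of_real y) powr (e - 1) * of_real b) (at (of_real y))"
    by (rule DERIV_chain2[OF has_field_derivative_powr])
  from has_vector_derivative_real_field[OF this, where s = S]
  show ?thesis by simp
qed

lemma Cinf_I11_powr_affine:
  fixes a b :: real and e :: complex
  assumes pos: "\<And>y. y \<in> I11 \<Longrightarrow> a + b*y > 0"
  shows "Cinf_I11 (\<lambda>y. complex_of_real (a + b*y) powr e)"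
  unfolding Cinf_I11_def
proof (intro exI[of _ "\<lambda>k y. (\<Prod>j<k. (e - of_nat j)) * of_real b^k * complex_of_real (a + b*y) powr (e - of_nat k)"]
    conjI allI ballI)
  fix k y assume y: "y \<in> I11"
  from has_vector_derivative_mult_right[OF has_vector_derivative_powr_affine[OF pos[OF y], where e = "e - of_nat k" and S = I11],
      where a = "(\<Prod>j<k. (e - of_nat j)) * of_real b^k"]
  show "((\<lambda>y. (\<Prod>j<k. (e - of_nat j)) * of_real b^k * complex_of_real (a + b*y) powr (e - of_nat k))
      has_vector_derivative
      (\<Prod>j<Suc k. (e - of_nat j)) * of_real b^(Suc k) * complex_of_real (a + b*y) powr (e - of_nat (Suc k)))
      (at y within I11)"
    by (simp add: algebra_simps diff_diff_eq mult.assoc)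
qed simp

lemma Cinf_I11_diff_const: "Cinf_I11 (\<lambda>y::real. y - c)"
  unfolding Cinf_I11_def
proof (intro exI[of _ "\<lambda>k y. if k = 0 then y - c else if k = 1 then 1 else 0"] conjI allI ballI)
  fix k :: nat and y :: real
  show "((\<lambda>y. if k = 0 then y - c else if k = 1 then 1 else 0) has_vector_derivative
         (if Suc k = 0 then y - c else if Suc k = 1 then 1 else 0)) (at y within I11)"
    by (cases "k = 0")
       (simp_all add: has_real_derivative_iff_has_vector_derivative[symmetric],
        (rule derivative_eq_intros refl | simp)+)
qed simp

definition boost :: "real \<Rightarrow> real \<Rightarrow> real" where
  "boost c y = (y - c) / (1 - c*y)"

lemma boost_denom_pos:
  assumes "\<bar>c\<bar> < 1" "y \<in> I11"
  shows "1 - c*y > 0"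
proof -
  have "c*y \<le> \<bar>c\<bar> * \<bar>y\<bar>"
    by (metis abs_ge_self abs_mult)
  also have "\<dots> \<le> \<bar>c\<bar>"
    using assms(2) by (intro mult_left_le) auto
  finally show ?thesis
    using assms(1) by linarith
qed

lemma boost_in_I11:
  assumes c: "\<bar>c\<bar> < 1" and y: "y \<in> I11"
  shows "boost c y \<in> I11"
proof -
  have "0 \<le> (1+c)*(1-y)" "0 \<le> (1-c)*(1+y)"
    using c y by (auto intro!: mult_nonneg_nonneg)
  then have "y - c \<le> 1 - c*y" "-(1 - c*y) \<le> y - c"
    by (simp_all add: algebra_simps)
  then show ?thesis
    using boost_denom_pos[OF c y] by (simp add: boost_def pos_divide_le_eq le_divide_eq)
qed

lemma boost_image_I11: "\<bar>c\<bar> < 1 \<Longrightarrow> boost c ` I11 \<subseteq> I11"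
  using boost_in_I11 by blast

lemma boost_inverse:
  assumes c: "\<bar>c\<bar> < 1" and y: "y \<in> I11"
  shows "boost (-c) (boost c y) = y"
proof -
  have d: "1 - c*y \<noteq> 0"
    using boost_denom_pos[OF c y] by simp
  have "c^2 < 1"
    using c by (simp add: abs_square_less_1)
  then have "1 - c*c \<noteq> 0"
    by (simp add: power2_eq_square)
  moreover have "boost c y + c = y*(1-c*c)/(1-c*y)" "1 + c * boost c y = (1-c*c)/(1-c*y)"
    using d unfolding boost_def by (simp add: field_simps; simp add: algebra_simps)+
  ultimately show ?thesis
    using d by (simp add: boost_def)
qed

lemma Cinf_I11_boost:
  assumes c: "\<bar>c\<bar> < 1"
  shows "Cinf_I11 (boost c)"
proof -
  have "Cinf_I11 (\<lambda>y. (y - c) * (1 + (-c)*y) powr (-1))"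
    using boost_denom_pos[OF c]
    by (intro Cinf_I11_mult Cinf_I11_diff_const Cinf_I11_powr_affine_real) auto
  then show ?thesis
  proof (rule Cinf_I11_cong)
    fix x :: real assume x: "x \<in> I11"
    have "1 + (-c)*x > 0"
      using boost_denom_pos[OF c x] by simp
    then show "(x - c) * (1 + (-c)*x) powr (-1) = boost c x"
      by (simp add: powr_neg_one boost_def divide_inverse)
  qed
qed

lemma boost_has_real_derivative:
  assumes c: "\<bar>c\<bar> < 1" and y: "y \<in> I11"
  shows "(boost c has_real_derivative (1 - c^2)/(1 - c*y)^2) (at y)"
proof -
  have "1 - c*y \<noteq> 0"
    using boost_denom_pos[OF c y] by simp
  from DERIV_divide[OF DERIV_diff[OF DERIV_ident DERIV_const]
      DERIV_diff[OF DERIV_const DERIV_cmult[OF DERIV_ident]] this]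
  show ?thesis
    unfolding boost_def[abs_def]
    by (rule DERIV_cong) (simp add: power2_eq_square algebra_simps)
qed

definition E1_lhs :: "real \<Rightarrow> complex \<Rightarrow> real \<Rightarrow> complex \<Rightarrow> complex \<Rightarrow> complex \<Rightarrow> complex" where
  "E1_lhs \<alpha> lam y u v w = (lam^2 + lam) * u
     + ((2*lam + 2) * of_real y + of_real (2*\<alpha> / (sqrt (1+\<alpha>) + y))) * v + of_real (y^2 - 1) * w"

definition E2_lhs :: "real \<Rightarrow> complex \<Rightarrow> real \<Rightarrow> complex \<Rightarrow> complex \<Rightarrow> complex \<Rightarrow> complex" where
  "E2_lhs \<alpha> lam y u v w = (lam^2 - lam) * u
     + (2*lam * of_real y + of_real (2 * sqrt (1+\<alpha>))) * v + of_real (y^2 - 1) * w"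

lemma solves_E1_iff:
  "solves_E1 \<alpha> lam \<phi> \<longleftrightarrow> (\<exists>D. deriv_chain \<phi> D \<and> (\<forall>y\<in>I11. E1_lhs \<alpha> lam y (\<phi> y) (D 1 y) (D 2 y) = 0))"
  by (simp add: solves_E1_def E1_lhs_def)

lemma solves_E2_iff:
  "solves_E2 \<alpha> lam \<psi> \<longleftrightarrow> (\<exists>D. deriv_chain \<psi> D \<and> (\<forall>y\<in>I11. E2_lhs \<alpha> lam y (\<psi> y) (D 1 y) (D 2 y) = 0))"
  by (simp add: solves_E2_def E2_lhs_def)

definition lor_gamma :: "real \<Rightarrow> real" where
  "lor_gamma \<alpha> = 1 / sqrt (1+\<alpha>)"

definition lor_base :: "real \<Rightarrow> real \<Rightarrow> real" where
  "lor_base \<alpha> y = (1 - lor_gamma \<alpha> * y) / sqrt (1 - (lor_gamma \<alpha>)^2)"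

definition lor_weight :: "real \<Rightarrow> complex \<Rightarrow> real \<Rightarrow> complex" where
  "lor_weight \<alpha> lam y = complex_of_real (lor_base \<alpha> y) powr (-lam)"

definition lor_q :: "real \<Rightarrow> real \<Rightarrow> real" where
  "lor_q \<alpha> y = lor_gamma \<alpha> / (1 - lor_gamma \<alpha> * y)"

definition lor_jac :: "real \<Rightarrow> real \<Rightarrow> real" where
  "lor_jac \<alpha> y = (1 - (lor_gamma \<alpha>)^2) / (1 - lor_gamma \<alpha> * y)^2"

lemma lorentz_eq: "lorentz \<alpha> lam \<phi> = (\<lambda>y. lor_weight \<alpha> lam y * \<phi> (boost (lor_gamma \<alpha>) y))"
  by (simp add: fun_eq_iff lorentz_def Let_def lor_weight_def lor_base_def lor_gamma_def boost_def)

definition lorentz_deriv1 ::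
    "real \<Rightarrow> complex \<Rightarrow> (real \<Rightarrow> complex) \<Rightarrow> (real \<Rightarrow> complex) \<Rightarrow> real \<Rightarrow> complex" where
  "lorentz_deriv1 \<alpha> lam \<phi> \<phi>1 y = (let m = boost (lor_gamma \<alpha>) y; q = of_real (lor_q \<alpha> y);
     j = of_real (lor_jac \<alpha> y) in
     lor_weight \<alpha> lam y * (lam * q * \<phi> m + j * \<phi>1 m))"

definition lorentz_deriv2 :: "real \<Rightarrow> complex \<Rightarrow> (real \<Rightarrow> complex) \<Rightarrow> (real \<Rightarrow> complex) \<Rightarrow>
    (real \<Rightarrow> complex) \<Rightarrow> real \<Rightarrow> complex" where
  "lorentz_deriv2 \<alpha> lam \<phi> \<phi>1 \<phi>2 y = (let m = boost (lor_gamma \<alpha>) y; q = of_real (lor_q \<alpha> y);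
     j = of_real (lor_jac \<alpha> y) in
     lam * q * lor_weight \<alpha> lam y * (lam * q * \<phi> m + j * \<phi>1 m)
     + lor_weight \<alpha> lam y * (lam * (q * q * \<phi> m + q * (j * \<phi>1 m)) + (2 * q * j * \<phi>1 m + j * (j * \<phi>2 m))))"

lemma boost_reciprocal_identities:
  fixes s y a :: real
  assumes s2: "s^2 = 1 + a" and s1: "s > 1" and y: "y \<le> 1" and a: "a > 0"
  shows "(1/s)/(1 - (1/s)*y) = 1/(s-y)"
    and "(1 - (1/s)^2)/(1 - (1/s)*y)^2 = (s^2-1)*(1/(s-y))^2"
    and "(y - 1/s)/(1 - (1/s)*y) = (s*y-1)*(1/(s-y))"
    and "2*a/(s + (y - 1/s)/(1 - (1/s)*y)) = 2*(s-y)"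
proof -
  have s0: "s \<noteq> 0" and sy: "s - y > 0"
    using s1 y by auto
  show "(1/s)/(1 - (1/s)*y) = 1/(s-y)"
    and "(1 - (1/s)^2)/(1 - (1/s)*y)^2 = (s^2-1)*(1/(s-y))^2"
    and "(y - 1/s)/(1 - (1/s)*y) = (s*y-1)*(1/(s-y))"
    using s0 sy by (simp_all add: field_simps)
  have "s + (y - 1/s)/(1 - (1/s)*y) = (s * s - 1)/(s-y)"
    using s0 sy by (simp add: field_simps)
  also have "s * s - 1 = a"
    using s2 by (simp add: power2_eq_square)
  finally show "2*a/(s + (y - 1/s)/(1 - (1/s)*y)) = 2*(s-y)"
    using a sy by simp
qed

context
  fixes \<alpha> :: real
  assumes \<alpha>_pos: "\<alpha> > 0"
begin

lemma sqrt_one_plus_gt_1: "sqrt (1+\<alpha>) > 1"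
  using \<alpha>_pos by (simp add: real_less_rsqrt)

lemma lor_gamma_abs_less_1: "\<bar>lor_gamma \<alpha>\<bar> < 1"
  using sqrt_one_plus_gt_1 by (simp add: lor_gamma_def)

lemma lor_gamma_square_less_1: "(lor_gamma \<alpha>)^2 < 1"
  using lor_gamma_abs_less_1 by (simp add: abs_square_less_1)

lemma lor_denom_pos: "y \<in> I11 \<Longrightarrow> 1 - lor_gamma \<alpha> * y > 0"
  using boost_denom_pos[OF lor_gamma_abs_less_1] .

lemma lor_base_affine:
  "lor_base \<alpha> y = 1 / sqrt (1 - (lor_gamma \<alpha>)^2) + (- lor_gamma \<alpha> / sqrt (1 - (lor_gamma \<alpha>)^2)) * y"
  by (simp add: lor_base_def diff_divide_distrib)

lemma lor_base_pos: "y \<in> I11 \<Longrightarrow> lor_base \<alpha> y > 0"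
  using lor_denom_pos lor_gamma_square_less_1 by (simp add: lor_base_def)

lemma lor_weight_nonzero: "y \<in> I11 \<Longrightarrow> lor_weight \<alpha> lam y \<noteq> 0"
  using lor_base_pos[of y] by (simp add: lor_weight_def)

lemma lor_weight_inverse: "y \<in> I11 \<Longrightarrow> lor_weight \<alpha> lam y * lor_weight \<alpha> (-lam) y = 1"
  using lor_base_pos[of y] by (simp add: lor_weight_def flip: powr_add)

lemma Cinf_I11_lor_weight: "Cinf_I11 (lor_weight \<alpha> lam)"
  unfolding lor_weight_def lor_base_affine
  by (rule Cinf_I11_powr_affine) (use lor_base_pos lor_base_affine in auto)

lemma lor_weight_has_vector_derivative:
  assumes y: "y \<in> I11"
  shows "(lor_weight \<alpha> lam has_vector_derivative lam * of_real (lor_q \<alpha> y) * lor_weight \<alpha> lam y)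
    (at y within I11)"
proof -
  define r where "r = sqrt (1 - (lor_gamma \<alpha>)^2)"
  define w where "w = complex_of_real (lor_base \<alpha> y)"
  have "w \<noteq> 0"
    using lor_base_pos[OF y] by (simp add: w_def)
  then have "w powr (-lam - 1) = w powr (-lam) / w"
    by (simp add: powr_diff)
  then have "-lam * w powr (-lam - 1) * of_real (- lor_gamma \<alpha> / r)
      = -lam * w powr (-lam) * (of_real (- lor_gamma \<alpha> / r) / w)"
    by simp
  also have "of_real (- lor_gamma \<alpha> / r) / w = of_real (- lor_q \<alpha> y)"
  proof -
    have "(- lor_gamma \<alpha> / r) / lor_base \<alpha> y = - lor_q \<alpha> y"
      using lor_denom_pos[OF y] lor_gamma_square_less_1
      by (simp add: lor_base_def lor_q_def r_def field_simps)
    then show ?thesis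
      by (simp add: w_def flip: of_real_divide)
  qed
  also have "-lam * w powr (-lam) * of_real (- lor_q \<alpha> y) = lam * of_real (lor_q \<alpha> y) * lor_weight \<alpha> lam y"
    by (simp add: lor_weight_def w_def)
  finally have deriv_eq: "-lam * w powr (-lam - 1) * of_real (- lor_gamma \<alpha> / r)
      = lam * of_real (lor_q \<alpha> y) * lor_weight \<alpha> lam y" .
  have "(lor_weight \<alpha> lam has_vector_derivative
      -lam * w powr (-lam - 1) * of_real (- lor_gamma \<alpha> / r)) (at y within I11)"
    unfolding lor_weight_def[abs_def] lor_base_affine w_def r_def
    by (rule has_vector_derivative_powr_affine) (use lor_base_pos[OF y] lor_base_affine in simp)
  then show ?thesis
    unfolding deriv_eq .
qed

lemma lor_q_has_vector_derivative:
  assumes y: "y \<in> I11"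
  shows "((\<lambda>y. complex_of_real (lor_q \<alpha> y)) has_vector_derivative
    of_real (lor_q \<alpha> y) * of_real (lor_q \<alpha> y)) (at y within I11)"
proof -
  define g where "g = lor_gamma \<alpha>"
  have "1 - g*y \<noteq> 0"
    using lor_denom_pos[OF y] by (simp add: g_def)
  from DERIV_divide[OF DERIV_const DERIV_diff[OF DERIV_const DERIV_cmult[OF DERIV_ident]] this]
  have "(lor_q \<alpha> has_real_derivative lor_q \<alpha> y * lor_q \<alpha> y) (at y within I11)"
    unfolding lor_q_def[abs_def] g_def[symmetric]
    by (rule has_field_derivative_at_within[OF DERIV_cong]) (simp add: field_simps)
  from has_vector_derivative_of_real[OF this] show ?thesis
    by simp
qed

lemma lor_jac_has_vector_derivative:
  assumes y: "y \<in> I11"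
  shows "((\<lambda>y. complex_of_real (lor_jac \<alpha> y)) has_vector_derivative
    2 * of_real (lor_q \<alpha> y) * of_real (lor_jac \<alpha> y)) (at y within I11)"
proof -
  define g where "g = lor_gamma \<alpha>"
  have d: "1 - g*y \<noteq> 0"
    using lor_denom_pos[OF y] by (simp add: g_def)
  then have "(1 - g*y)^2 \<noteq> 0"
    by simp
  from DERIV_divide[OF DERIV_const DERIV_power[OF DERIV_diff[OF DERIV_const DERIV_cmult[OF DERIV_ident]]] this]
  have "(lor_jac \<alpha> has_real_derivative 2 * lor_q \<alpha> y * lor_jac \<alpha> y) (at y within I11)"
    unfolding lor_jac_def[abs_def] lor_q_def g_def[symmetric]
  proof (rule has_field_derivative_at_within[OF DERIV_cong])
    have "(0*D^2 - c*(of_nat 2 * ((0 - g*1) * D^(2 - Suc 0))))/(D^2*D^2) = 2*(g/D)*(c/D^2)"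
      if "D \<noteq> 0" for c D :: real
      using that by (simp add: field_simps power2_eq_square)
    from this[OF d] show "(0 * (1 - g*y)^2 - (1 - g^2) * (of_nat 2 * ((0 - g*1) * (1 - g*y)^(2 - Suc 0))))
        / ((1 - g*y)^2 * (1 - g*y)^2) = 2 * (g / (1 - g*y)) * ((1 - g^2) / (1 - g*y)^2)" .
  qed
  from has_vector_derivative_of_real[OF this] show ?thesis
    by simp
qed

lemma has_vector_derivative_compose_boost:
  assumes y: "y \<in> I11" and f: "\<forall>x\<in>I11. (f has_vector_derivative f' x) (at x within I11)"
  shows "((\<lambda>y. f (boost (lor_gamma \<alpha>) y)) has_vector_derivative
    of_real (lor_jac \<alpha> y) * f' (boost (lor_gamma \<alpha>) y)) (at y within I11)"
proof -
  note boost_maps = boost_in_I11[OF lor_gamma_abs_less_1] boost_image_I11[OF lor_gamma_abs_less_1]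
  have "(boost (lor_gamma \<alpha>) has_vector_derivative lor_jac \<alpha> y) (at y within I11)"
    using has_field_derivative_at_within[OF boost_has_real_derivative[OF lor_gamma_abs_less_1 y]]
    by (simp add: has_real_derivative_iff_has_vector_derivative lor_jac_def)
  moreover have "(f has_vector_derivative f' (boost (lor_gamma \<alpha>) y))
      (at (boost (lor_gamma \<alpha>) y) within boost (lor_gamma \<alpha>) ` I11)"
    using f boost_maps y by (blast intro: has_vector_derivative_within_subset)
  ultimately show ?thesis
    by (auto dest: vector_diff_chain_within simp: o_def scaleR_conv_of_real)
qed

lemma lorentz_has_vector_derivative:
  assumes y: "y \<in> I11" and \<phi>1: "\<forall>x\<in>I11. (\<phi> has_vector_derivative \<phi>1 x) (at x within I11)"
  shows "(lorentz \<alpha> lam \<phi> has_vector_derivative lorentz_deriv1 \<alpha> lam \<phi> \<phi>1 y) (at y within I11)"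
  unfolding lorentz_eq
  by (rule has_vector_derivative_eq_rhs[OF has_vector_derivative_mult[OF
        lor_weight_has_vector_derivative[OF y] has_vector_derivative_compose_boost[OF y \<phi>1]]])
     (simp add: lorentz_deriv1_def Let_def algebra_simps)

lemma lorentz_deriv1_has_vector_derivative:
  assumes y: "y \<in> I11"
    and \<phi>1: "\<forall>x\<in>I11. (\<phi> has_vector_derivative \<phi>1 x) (at x within I11)"
    and \<phi>2: "\<forall>x\<in>I11. (\<phi>1 has_vector_derivative \<phi>2 x) (at x within I11)"
  shows "(lorentz_deriv1 \<alpha> lam \<phi> \<phi>1 has_vector_derivative lorentz_deriv2 \<alpha> lam \<phi> \<phi>1 \<phi>2 y) (at y within I11)"
proof -
  have "((\<lambda>y. lam * complex_of_real (lor_q \<alpha> y)) has_vector_derivative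
      lam * (of_real (lor_q \<alpha> y) * of_real (lor_q \<alpha> y))) (at y within I11)"
    by (rule has_vector_derivative_mult_right[OF lor_q_has_vector_derivative[OF y]])
  from has_vector_derivative_mult[OF this has_vector_derivative_compose_boost[OF y \<phi>1]]
    has_vector_derivative_mult[OF lor_jac_has_vector_derivative[OF y] has_vector_derivative_compose_boost[OF y \<phi>2]]
  have "((\<lambda>y. lam * of_real (lor_q \<alpha> y) * \<phi> (boost (lor_gamma \<alpha>) y)
        + of_real (lor_jac \<alpha> y) * \<phi>1 (boost (lor_gamma \<alpha>) y)) has_vector_derivative
      lam * of_real (lor_q \<alpha> y) * (of_real (lor_jac \<alpha> y) * \<phi>1 (boost (lor_gamma \<alpha>) y))
      + lam * (of_real (lor_q \<alpha> y) * of_real (lor_q \<alpha> y)) * \<phi> (boost (lor_gamma \<alpha>) y)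
      + (of_real (lor_jac \<alpha> y) * (of_real (lor_jac \<alpha> y) * \<phi>2 (boost (lor_gamma \<alpha>) y))
         + 2 * of_real (lor_q \<alpha> y) * of_real (lor_jac \<alpha> y) * \<phi>1 (boost (lor_gamma \<alpha>) y))) (at y within I11)"
    by (rule has_vector_derivative_add)
  from has_vector_derivative_mult[OF lor_weight_has_vector_derivative[OF y] this]
  show ?thesis
    unfolding lorentz_deriv1_def[abs_def] Let_def
    by (rule has_vector_derivative_eq_rhs) (simp add: lorentz_deriv2_def Let_def algebra_simps)
qed

text \<open>With \<open>s = \<surd>(1+\<alpha>)\<close> and \<open>b = s - y\<close>, every coefficient is a polynomial in \<open>s\<close>, \<open>b\<close> and \<open>1/b\<close>,
  so the identity is a ring identity modulo \<open>b \<cdot> (1/b) = 1\<close>.\<close>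

lemma E2_lhs_lorentz:
  assumes y: "y \<in> I11"
  shows "E2_lhs \<alpha> lam y (lorentz \<alpha> lam \<phi> y) (lorentz_deriv1 \<alpha> lam \<phi> \<phi>1 y) (lorentz_deriv2 \<alpha> lam \<phi> \<phi>1 \<phi>2 y)
    = lor_weight \<alpha> lam y * of_real (lor_jac \<alpha> y) * E1_lhs \<alpha> lam (boost (lor_gamma \<alpha>) y)
        (\<phi> (boost (lor_gamma \<alpha>) y)) (\<phi>1 (boost (lor_gamma \<alpha>) y)) (\<phi>2 (boost (lor_gamma \<alpha>) y))"
proof -
  have y1: "y \<le> 1"
    using y by simp
  have "sqrt (1+\<alpha>)^2 = 1+\<alpha>"
    using \<alpha>_pos by simp
  note identities = boost_reciprocal_identities[OF this sqrt_one_plus_gt_1 y1 \<alpha>_pos]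
  have sy: "sqrt (1+\<alpha>) - y > 0"
    using sqrt_one_plus_gt_1 y1 by linarith
  define S where "S = complex_of_real (sqrt (1+\<alpha>))"
  define b where "b = complex_of_real (sqrt (1+\<alpha>) - y)"
  define ib where "ib = complex_of_real (1 / (sqrt (1+\<alpha>) - y))"
  have hb: "b * ib = 1"
    unfolding b_def ib_def of_real_mult[symmetric] using sy by simp
  have y_eq: "complex_of_real y = S - b"
    by (simp add: S_def b_def)
  have q_eq: "complex_of_real (lor_q \<alpha> y) = ib"
    unfolding ib_def lor_q_def lor_gamma_def by (simp only: identities(1))
  have jac_eq: "complex_of_real (lor_jac \<alpha> y) = (S^2-1)*ib^2"
    unfolding ib_def S_def lor_jac_def lor_gamma_def
    by (simp only: identities(2) of_real_mult of_real_diff of_real_power of_real_1)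
  have "complex_of_real (boost (lor_gamma \<alpha>) y) = (S * of_real y - 1) * ib"
    unfolding ib_def S_def boost_def lor_gamma_def
    by (simp only: identities(3) of_real_mult of_real_diff of_real_1)
  then have boost_eq: "complex_of_real (boost (lor_gamma \<alpha>) y) = (S*(S-b)-1)*ib"
    by (simp only: y_eq)
  have coeff_eq: "complex_of_real (2*\<alpha> / (sqrt (1+\<alpha>) + boost (lor_gamma \<alpha>) y)) = 2*b"
    unfolding b_def boost_def lor_gamma_def
    by (simp only: identities(4) of_real_mult of_real_numeral)
  have "complex_of_real (2 * sqrt (1+\<alpha>)) = 2*S"
    by (simp add: S_def)
  moreover have "complex_of_real (y^2 - 1) = (S-b)^2-1"
    by (simp only: of_real_diff of_real_power of_real_1 y_eq)
  moreover have "complex_of_real ((boost (lor_gamma \<alpha>) y)^2 - 1) = ((S*(S-b)-1)*ib)^2-1"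
    by (simp only: of_real_diff of_real_power of_real_1 boost_eq)
  ultimately show ?thesis
    unfolding E1_lhs_def E2_lhs_def lorentz_eq lorentz_deriv1_def lorentz_deriv2_def Let_def
    by (simp only: q_eq jac_eq boost_eq coeff_eq y_eq) (use hb in algebra)
qed

lemma E2_lhs_lorentz_deriv_chain:
  assumes E: "deriv_chain (lorentz \<alpha> lam \<phi>) E" and D: "deriv_chain \<phi> D" and y: "y \<in> I11"
  shows "E2_lhs \<alpha> lam y (lorentz \<alpha> lam \<phi> y) (E 1 y) (E 2 y)
    = lor_weight \<alpha> lam y * of_real (lor_jac \<alpha> y) * E1_lhs \<alpha> lam (boost (lor_gamma \<alpha>) y)
        (\<phi> (boost (lor_gamma \<alpha>) y)) (D 1 (boost (lor_gamma \<alpha>) y)) (D 2 (boost (lor_gamma \<alpha>) y))"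
proof -
  note E' = deriv_chain_derivatives[OF E] and D' = deriv_chain_derivatives[OF D]
  have E1: "E 1 x = lorentz_deriv1 \<alpha> lam \<phi> (D 1) x" if x: "x \<in> I11" for x
    by (rule has_vector_derivative_unique_I11[OF x _ E'(1)[rule_format, OF x]
          lorentz_has_vector_derivative[OF x D'(1)]]) simp
  have "E 2 y = lorentz_deriv2 \<alpha> lam \<phi> (D 1) (D 2) y"
    by (rule has_vector_derivative_unique_I11[OF y _ E'(2)[rule_format, OF y]
          lorentz_deriv1_has_vector_derivative[OF y D']]) (rule E1)
  then show ?thesis
    using E2_lhs_lorentz[OF y] E1[OF y] by simp
qed

lemma Cinf_I11_lorentz:
  assumes "Cinf_I11 \<phi>"
  shows "Cinf_I11 (lorentz \<alpha> lam \<phi>)"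
  unfolding lorentz_eq
  using Cinf_I11_compose[OF Cinf_I11_boost boost_image_I11 assms, OF lor_gamma_abs_less_1 lor_gamma_abs_less_1]
  by (rule Cinf_I11_mult[OF Cinf_I11_lor_weight])

lemma lor_jac_nonzero: "y \<in> I11 \<Longrightarrow> lor_jac \<alpha> y \<noteq> 0"
  using lor_gamma_square_less_1 lor_denom_pos[of y] by (simp add: lor_jac_def)

lemma solves_E2_lorentz:
  assumes "solves_E1 \<alpha> lam \<phi>"
  shows "solves_E2 \<alpha> lam (lorentz \<alpha> lam \<phi>)"
proof -
  obtain D where D: "deriv_chain \<phi> D" and E1: "\<forall>y\<in>I11. E1_lhs \<alpha> lam y (\<phi> y) (D 1 y) (D 2 y) = 0"
    using assms unfolding solves_E1_iff by blast
  have "Cinf_I11 \<phi>"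
    using D by (auto simp flip: smooth_I11_iff_Cinf_I11 simp: smooth_I11_def)
  then have "smooth_I11 (lorentz \<alpha> lam \<phi>)"
    by (simp add: smooth_I11_iff_Cinf_I11 Cinf_I11_lorentz)
  then obtain E where E: "deriv_chain (lorentz \<alpha> lam \<phi>) E"
    unfolding smooth_I11_def by blast
  have "E2_lhs \<alpha> lam y (lorentz \<alpha> lam \<phi> y) (E 1 y) (E 2 y) = 0" if y: "y \<in> I11" for y
    using E2_lhs_lorentz_deriv_chain[OF E D y] E1 boost_in_I11[OF lor_gamma_abs_less_1 y] by simp
  with E show ?thesis
    unfolding solves_E2_iff by blast
qed

lemma lorentz_inverse:
  assumes "y \<in> I11"
  shows "lorentz \<alpha> lam (\<lambda>x. lor_weight \<alpha> (-lam) (boost (- lor_gamma \<alpha>) x) * \<psi> (boost (- lor_gamma \<alpha>) x)) y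
    = \<psi> y"
  using boost_inverse[OF lor_gamma_abs_less_1 assms] lor_weight_inverse[OF assms]
  by (simp add: lorentz_eq mult.assoc)

text \<open>The factor \<open>lor_weight \<cdot> lor_jac\<close> in the transform identity never vanishes, so the (E2) equation
  for \<open>lorentz \<alpha> lam \<phi>\<close> forces the (E1) equation for \<open>\<phi>\<close>.\<close>

lemma solves_E1_lorentz_preimage:
  assumes "solves_E2 \<alpha> lam \<psi>"
  obtains \<phi> where "solves_E1 \<alpha> lam \<phi>" "\<forall>y\<in>I11. \<psi> y = lorentz \<alpha> lam \<phi> y"
proof -
  obtain E where E: "deriv_chain \<psi> E" and E2: "\<forall>y\<in>I11. E2_lhs \<alpha> lam y (\<psi> y) (E 1 y) (E 2 y) = 0"
    using assms unfolding solves_E2_iff by blast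
  have c: "\<bar>- lor_gamma \<alpha>\<bar> < 1"
    using lor_gamma_abs_less_1 by simp
  define \<phi> where "\<phi> x = lor_weight \<alpha> (-lam) (boost (- lor_gamma \<alpha>) x) * \<psi> (boost (- lor_gamma \<alpha>) x)" for x
  have \<psi>_eq: "\<forall>y\<in>I11. \<psi> y = lorentz \<alpha> lam \<phi> y"
    unfolding \<phi>_def using lorentz_inverse by simp
  have "Cinf_I11 \<psi>"
    using E by (auto simp flip: smooth_I11_iff_Cinf_I11 simp: smooth_I11_def)
  then have "Cinf_I11 \<phi>"
    unfolding \<phi>_def
    using Cinf_I11_compose[OF Cinf_I11_boost[OF c] boost_image_I11[OF c]]
    by (intro Cinf_I11_mult) (simp_all add: Cinf_I11_lor_weight)
  then obtain D where D: "deriv_chain \<phi> D"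
    unfolding smooth_I11_iff_Cinf_I11[symmetric] smooth_I11_def by blast
  have E': "deriv_chain (lorentz \<alpha> lam \<phi>) E"
    using E \<psi>_eq by (simp add: deriv_chain_def)
  have "E1_lhs \<alpha> lam x (\<phi> x) (D 1 x) (D 2 x) = 0" if x: "x \<in> I11" for x
  proof -
    define y where "y = boost (- lor_gamma \<alpha>) x"
    have y: "y \<in> I11" and x_eq: "boost (lor_gamma \<alpha>) y = x"
      using boost_in_I11[OF c x] boost_inverse[OF c x] by (simp_all add: y_def)
    have "lor_weight \<alpha> lam y * of_real (lor_jac \<alpha> y) * E1_lhs \<alpha> lam x (\<phi> x) (D 1 x) (D 2 x) = 0"
      using E2_lhs_lorentz_deriv_chain[OF E' D y] E2 \<psi>_eq y by (simp add: x_eq)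
    then show ?thesis
      using lor_weight_nonzero[OF y] lor_jac_nonzero[OF y] by simp
  qed
  with D have "solves_E1 \<alpha> lam \<phi>"
    unfolding solves_E1_iff by blast
  then show thesis
    using \<psi>_eq by (rule that)
qed

lemma nontrivial_lorentz_iff: "nontrivial_I11 (lorentz \<alpha> lam \<phi>) \<longleftrightarrow> nontrivial_I11 \<phi>"
proof -
  have c: "\<bar>- lor_gamma \<alpha>\<bar> < 1"
    using lor_gamma_abs_less_1 by simp
  have "boost (lor_gamma \<alpha>) ` I11 = I11"
  proof
    show "I11 \<subseteq> boost (lor_gamma \<alpha>) ` I11"
    proof
      fix x assume x: "x \<in> I11"
      have "x = boost (lor_gamma \<alpha>) (boost (- lor_gamma \<alpha>) x)"
        using boost_inverse[OF c x] by simp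
      with boost_in_I11[OF c x] show "x \<in> boost (lor_gamma \<alpha>) ` I11"
        by (rule rev_image_eqI)
    qed
  qed (rule boost_image_I11[OF lor_gamma_abs_less_1])
  moreover have "(\<exists>x\<in>I11. \<phi> (boost (lor_gamma \<alpha>) x) \<noteq> 0) \<longleftrightarrow> (\<exists>x\<in>boost (lor_gamma \<alpha>) ` I11. \<phi> x \<noteq> 0)"
    by blast
  ultimately have "(\<exists>x\<in>I11. \<phi> (boost (lor_gamma \<alpha>) x) \<noteq> 0) \<longleftrightarrow> (\<exists>x\<in>I11. \<phi> x \<noteq> 0)"
    by simp
  then show ?thesis
    unfolding nontrivial_I11_def lorentz_eq using lor_weight_nonzero by auto
qed

end

theorem mainTheorem4:
  fixes \<alpha> :: real and lam :: complex
  assumes "\<alpha> > 0"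
  shows "((\<exists>\<phi>. solves_E1 \<alpha> lam \<phi> \<and> nontrivial_I11 \<phi>) \<longleftrightarrow>
          (\<exists>\<psi>. solves_E2 \<alpha> lam \<psi> \<and> nontrivial_I11 \<psi>))
       \<and> (\<forall>\<phi>. solves_E1 \<alpha> lam \<phi> \<longrightarrow> solves_E2 \<alpha> lam (lorentz \<alpha> lam \<phi>))
       \<and> (\<forall>\<psi>. solves_E2 \<alpha> lam \<psi> \<longrightarrow>
            (\<exists>\<phi>. solves_E1 \<alpha> lam \<phi> \<and> (\<forall>y\<in>{-1..1}. \<psi> y = lorentz \<alpha> lam \<phi> y)))"
proof (intro conjI allI impI)
  show forward: "solves_E2 \<alpha> lam (lorentz \<alpha> lam \<phi>)" if "solves_E1 \<alpha> lam \<phi>" for \<phi>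
    using solves_E2_lorentz[OF assms that] .
  show backward: "\<exists>\<phi>. solves_E1 \<alpha> lam \<phi> \<and> (\<forall>y\<in>{-1..1}. \<psi> y = lorentz \<alpha> lam \<phi> y)"
    if "solves_E2 \<alpha> lam \<psi>" for \<psi>
    using solves_E1_lorentz_preimage[OF assms that] by blast
  show "(\<exists>\<phi>. solves_E1 \<alpha> lam \<phi> \<and> nontrivial_I11 \<phi>) \<longleftrightarrow> (\<exists>\<psi>. solves_E2 \<alpha> lam \<psi> \<and> nontrivial_I11 \<psi>)"
  proof
    assume "\<exists>\<phi>. solves_E1 \<alpha> lam \<phi> \<and> nontrivial_I11 \<phi>"
    then show "\<exists>\<psi>. solves_E2 \<alpha> lam \<psi> \<and> nontrivial_I11 \<psi>"
      using forward nontrivial_lorentz_iff[OF assms] by blast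
  next
    assume "\<exists>\<psi>. solves_E2 \<alpha> lam \<psi> \<and> nontrivial_I11 \<psi>"
    then obtain \<psi> \<phi> where "nontrivial_I11 \<psi>" "solves_E1 \<alpha> lam \<phi>" "\<forall>y\<in>I11. \<psi> y = lorentz \<alpha> lam \<phi> y"
      using backward by blast
    moreover from this have "nontrivial_I11 (lorentz \<alpha> lam \<phi>)"
      unfolding nontrivial_I11_def by force
    ultimately show "\<exists>\<phi>. solves_E1 \<alpha> lam \<phi> \<and> nontrivial_I11 \<phi>"
      using nontrivial_lorentz_iff[OF assms] by blast
  qed
qed

end
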